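(* Let $G$ be a finite simple graph with $V(G)=\{v_1,\dots,v_n\}$, where vertex $v_i$ carries positive integer weight $t_i$. Let $G(v_1,\dots,v_n)$ be the unweighted graph obtained by replacing each $v_i$ by an independent set $I_i$ of $t_i$ new vertices, where a vertex of $I_i$ is adjacent to a vertex of $I_j$ ($i\neq j$) if and only if $v_iv_j\in E(G)$, and no two vertices of the same $I_i$ are adjacent. Then weighted Grim played on $G$ and ordinary Grim played on $G(v_1,\dots,v_n)$ have the same outcome: one is an $\mathcal{N}$ position if and only if the other is.
   Context: Grim is a two-player game on a finite simple undirected graph. Any isolated vertices of the starting graph are deleted before play begins. Players alternate moves; in ordinary (unweighted) Grim a move consists of selecting a vertex of the current graph and deleting it together with all its incident edges, after which every vertex that has become isolated is also deleted. The player who makes the last legal move wins (a player facing the empty graph has no move and loses). In weighted Grim each vertex carries a positive integer weight; a vertex of weight $t$ is deleted only once it has been selected $t$ times (each selection is a move and lowers its remaining weight by one, the selection that brings it to zero deleting it with its incident edges), or when it becomes isolated, in which case it is deleted. A position is an $\mathcal{N}$ position if the player about to move has a winning strategy, and a $\mathcal{P}$ position otherwise. *)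

theory Defs
  imports Main
begin

text \<open>For games without
  infinite plays (as Grim) this least fixed point is the usual N/P classification.\<close>

inductive N_pos :: "('s \<Rightarrow> 's \<Rightarrow> bool) \<Rightarrow> 's \<Rightarrow> bool" for mv :: "'s \<Rightarrow> 's \<Rightarrow> bool" where
  "mv s s' \<Longrightarrow> (\<forall>s''. mv s' s'' \<longrightarrow> N_pos mv s'') \<Longrightarrow> N_pos mv s"

text \<open>Simple graphs: a vertex set and a symmetric irreflexive edge relation.
  A current position is the set S of remaining vertices (induced subgraph).
  strip deletes the vertices of S isolated in the subgraph induced by S.\<close>

definition strip :: "('a \<Rightarrow> 'a \<Rightarrow> bool) \<Rightarrow> 'a set \<Rightarrow> 'a set" where
  "strip E S = {x \<in> S. \<exists>y\<in>S. E x y}"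

definition grim_move :: "('a \<Rightarrow> 'a \<Rightarrow> bool) \<Rightarrow> 'a set \<Rightarrow> 'a set \<Rightarrow> bool" where
  "grim_move E S S' \<longleftrightarrow> (\<exists>v\<in>S. S' = strip E (S - {v}))"

definition wgrim_move ::
  "('a \<Rightarrow> 'a \<Rightarrow> bool) \<Rightarrow> ('a set \<times> ('a \<Rightarrow> nat)) \<Rightarrow> ('a set \<times> ('a \<Rightarrow> nat)) \<Rightarrow> bool" where
  "wgrim_move E p p' \<longleftrightarrow>
     (\<exists>v\<in>fst p.
        (1 < snd p v \<and> p' = (fst p, (snd p)(v := snd p v - 1))) \<or>
        (snd p v = 1 \<and> p' = (strip E (fst p - {v}), snd p)))"

definition blowV :: "'a set \<Rightarrow> ('a \<Rightarrow> nat) \<Rightarrow> ('a \<times> nat) set" where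
  "blowV V t = {(v, k). v \<in> V \<and> k < t v}"

definition blowE :: "('a \<Rightarrow> 'a \<Rightarrow> bool) \<Rightarrow> ('a \<times> nat) \<Rightarrow> ('a \<times> nat) \<Rightarrow> bool" where
  "blowE E x y \<longleftrightarrow> fst x \<noteq> fst y \<and> E (fst x) (fst y)"

end

theory Submission
  imports Defs
begin

text \<open>The copies of a vertex in the blow-up are pairwise non-adjacent and have the
  same neighbours, so they are interchangeable: selecting any copy of v in the blow-up
  plays the role of selecting v once in weighted Grim, and v disappears exactly when
  its last copy does.  Hence a weighted position (S, w) and a blow-up position with
  w v copies over each v \<in> S are related by a bisimulation of the two move relations,
  and bisimilar positions have the same outcome.\<close>

lemma N_pos_transfer:
  assumes fwd: "\<And>a b a'. R a b \<Longrightarrow> m1 a a' \<Longrightarrow> \<exists>b'. m2 b b' \<and> R a' b'"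
    and bwd: "\<And>a b b'. R a b \<Longrightarrow> m2 b b' \<Longrightarrow> \<exists>a'. m1 a a' \<and> R a' b'"
  shows "N_pos m1 a \<Longrightarrow> R a b \<Longrightarrow> N_pos m2 b"
proof (induction arbitrary: b rule: N_pos.induct)
  case (1 a a')
  from fwd[OF 1(3) 1(1)] obtain b' where "m2 b b'" and "R a' b'" by blast
  moreover have "N_pos m2 b''" if "m2 b' b''" for b''
    using bwd[OF \<open>R a' b'\<close> that] 1(2) by blast
  ultimately show ?case by (blast intro: N_pos.intros)
qed

lemma N_pos_bisim_iff:
  assumes fwd: "\<And>a b a'. R a b \<Longrightarrow> m1 a a' \<Longrightarrow> \<exists>b'. m2 b b' \<and> R a' b'"
    and bwd: "\<And>a b b'. R a b \<Longrightarrow> m2 b b' \<Longrightarrow> \<exists>a'. m1 a a' \<and> R a' b'"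
    and "R a b"
  shows "N_pos m1 a \<longleftrightarrow> N_pos m2 b"
proof
  show "N_pos m1 a \<Longrightarrow> N_pos m2 b"
    using N_pos_transfer[of R m1 m2] fwd bwd \<open>R a b\<close> by blast
  show "N_pos m2 b \<Longrightarrow> N_pos m1 a"
    using N_pos_transfer[of "\<lambda>b a. R a b" m2 m1] fwd bwd \<open>R a b\<close> by blast
qed

lemma strip_subset: "strip E S \<subseteq> S"
  unfolding strip_def by blast

lemma strip_strip:
  assumes "\<And>x y. E x y \<Longrightarrow> E y x"
  shows "strip E (strip E S) = strip E S"
  using assms unfolding strip_def by blast

lemma strip_blowE:
  assumes "\<And>x. \<not> E x x"
  shows "strip (blowE E) T = {y \<in> T. fst y \<in> strip E (fst ` T)}"
  using assms unfolding strip_def blowE_def by (auto; metis fst_conv)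

definition blow_rel :: "('a \<Rightarrow> 'a \<Rightarrow> bool) \<Rightarrow> 'a set \<times> ('a \<Rightarrow> nat) \<Rightarrow> ('a \<times> nat) set \<Rightarrow> bool" where
  "blow_rel E p T \<longleftrightarrow> finite T \<and> fst ` T = fst p \<and> strip E (fst p) = fst p \<and>
     (\<forall>v\<in>fst p. snd p v = card (Pair v -` T))"

lemma blow_rel_iff:
  "blow_rel E (S, w) T \<longleftrightarrow>
     finite T \<and> fst ` T = S \<and> strip E S = S \<and> (\<forall>v\<in>S. w v = card (Pair v -` T))"
  by (simp add: blow_rel_def)

lemma fst_image_Collect_fst: "fst ` {y \<in> T. P (fst y)} = {x \<in> fst ` T. P x}"
  by force

lemma finite_Pair_vimage: "finite T \<Longrightarrow> finite (Pair v -` T)"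
  by (rule finite_vimageI) (auto simp: inj_on_def)

lemma blow_rel_remove_copy:
  assumes irr: "\<And>x. \<not> E x x"
    and rel: "blow_rel E (S, w) T" and vk: "(v, k) \<in> T" and "1 < w v"
  shows "blow_rel E (S, w(v := w v - 1)) (strip (blowE E) (T - {(v, k)}))"
proof -
  have fin: "finite T" and S: "fst ` T = S" and sS: "strip E S = S"
    and w: "\<forall>u\<in>S. w u = card (Pair u -` T)" using rel unfolding blow_rel_iff by blast+
  have "v \<in> S" using vk S by force
  then have "Pair v -` T \<noteq> {k}" using w \<open>1 < w v\<close> by auto
  then obtain k' where "(v, k') \<in> T" "k' \<noteq> k" using vk by blast
  then have "v \<in> fst ` (T - {(v, k)})" by (intro image_eqI[of _ _ "(v, k')"]) auto
  moreover have "fst ` T = insert v (fst ` (T - {(v, k)}))"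
    by (metis vk fst_conv image_insert insert_Diff)
  ultimately have fst_T': "fst ` (T - {(v, k)}) = S" using S by (simp add: insert_absorb)
  have T': "strip (blowE E) (T - {(v, k)}) = T - {(v, k)}"
    unfolding strip_blowE[OF irr] fst_T' sS using S by force
  have "(w(v := w v - 1)) u = card (Pair u -` (T - {(v, k)}))" if "u \<in> S" for u
  proof (cases "u = v")
    case True
    then have "Pair u -` (T - {(v, k)}) = Pair v -` T - {k}" by blast
    then show ?thesis
      using True w that vk fin by (simp add: card_Diff_singleton finite_Pair_vimage)
  next
    case False
    then have "Pair u -` (T - {(v, k)}) = Pair u -` T" by blast
    then show ?thesis using False w that by simp
  qed
  then show ?thesis
    unfolding blow_rel_iff T' using fin fst_T' sS finite_Diff by blast
qed

lemma blow_rel_remove_last_copy: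
  assumes sym: "\<And>x y. E x y \<Longrightarrow> E y x" and irr: "\<And>x. \<not> E x x"
    and rel: "blow_rel E (S, w) T" and vk: "(v, k) \<in> T" and "w v = 1"
  shows "blow_rel E (strip E (S - {v}), w) (strip (blowE E) (T - {(v, k)}))"
proof -
  have fin: "finite T" and S: "fst ` T = S"
    and w: "\<forall>u\<in>S. w u = card (Pair u -` T)" using rel unfolding blow_rel_iff by blast+
  have "v \<in> S" using vk S by force
  then have "Pair v -` T = {k}"
    using w \<open>w v = 1\<close> vk by (metis card_1_singletonE singletonD vimageI2)
  then have copies: "T - {(v, k)} = {y \<in> T. fst y \<noteq> v}" by fastforce
  have "fst ` (T - {(v, k)}) = S - {v}"
    unfolding copies using fst_image_Collect_fst[of T "\<lambda>x. x \<noteq> v"] S by auto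
  moreover have "v \<notin> strip E (S - {v})" using strip_subset[of E "S - {v}"] by blast
  ultimately have T': "strip (blowE E) (T - {(v, k)}) = {y \<in> T. fst y \<in> strip E (S - {v})}"
    unfolding strip_blowE[OF irr] by auto
  show ?thesis
    unfolding blow_rel_iff T'
  proof (intro conjI ballI)
    show "finite {y \<in> T. fst y \<in> strip E (S - {v})}" using fin by simp
    show "fst ` {y \<in> T. fst y \<in> strip E (S - {v})} = strip E (S - {v})"
      using fst_image_Collect_fst[of T "\<lambda>x. x \<in> strip E (S - {v})"] S strip_subset[of E "S - {v}"]
      by blast
    show "strip E (strip E (S - {v})) = strip E (S - {v})" using strip_strip[of E, OF sym] .
    fix u assume u: "u \<in> strip E (S - {v})"
    then have "u \<in> S" using strip_subset[of E "S - {v}"] by blast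
    moreover have "Pair u -` {y \<in> T. fst y \<in> strip E (S - {v})} = Pair u -` T" using u by auto
    ultimately show "w u = card (Pair u -` {y \<in> T. fst y \<in> strip E (S - {v})})" using w by simp
  qed
qed

lemma wgrim_move_blow_simulation:
  assumes sym: "\<And>x y. E x y \<Longrightarrow> E y x" and irr: "\<And>x. \<not> E x x"
    and rel: "blow_rel E p T" and "wgrim_move E p p'"
  shows "\<exists>T'. grim_move (blowE E) T T' \<and> blow_rel E p' T'"
proof -
  obtain S w where p: "p = (S, w)" by (cases p)
  from \<open>wgrim_move E p p'\<close> obtain v where "v \<in> S" and move:
    "(1 < w v \<and> p' = (S, w(v := w v - 1))) \<or> (w v = 1 \<and> p' = (strip E (S - {v}), w))"
    unfolding wgrim_move_def p by auto
  from rel \<open>v \<in> S\<close> obtain k where vk: "(v, k) \<in> T" unfolding p blow_rel_iff by force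
  have "grim_move (blowE E) T (strip (blowE E) (T - {(v, k)}))"
    unfolding grim_move_def using vk by blast
  with move show ?thesis
    using blow_rel_remove_copy[OF irr rel[unfolded p] vk]
      blow_rel_remove_last_copy[OF sym irr rel[unfolded p] vk] by blast
qed

lemma grim_move_blow_simulation:
  assumes sym: "\<And>x y. E x y \<Longrightarrow> E y x" and irr: "\<And>x. \<not> E x x"
    and rel: "blow_rel E p T" and "grim_move (blowE E) T T'"
  shows "\<exists>p'. wgrim_move E p p' \<and> blow_rel E p' T'"
proof -
  obtain S w where p: "p = (S, w)" by (cases p)
  from \<open>grim_move (blowE E) T T'\<close> obtain v k where vk: "(v, k) \<in> T"
    and T': "T' = strip (blowE E) (T - {(v, k)})" unfolding grim_move_def by auto
  have fin: "finite T" and S: "fst ` T = S" and w: "\<forall>u\<in>S. w u = card (Pair u -` T)"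
    using rel unfolding p blow_rel_iff by blast+
  have "v \<in> S" using vk S by force
  then have "0 < w v" using w vk fin by (auto simp: card_gt_0_iff finite_Pair_vimage)
  then consider "1 < w v" | "w v = 1" by linarith
  then show ?thesis
  proof cases
    case 1
    then have "wgrim_move E (S, w) (S, w(v := w v - 1))"
      unfolding wgrim_move_def using \<open>v \<in> S\<close> by auto
    then show ?thesis using blow_rel_remove_copy[OF irr rel[unfolded p] vk 1] unfolding p T' by blast
  next
    case 2
    then have "wgrim_move E (S, w) (strip E (S - {v}), w)"
      unfolding wgrim_move_def using \<open>v \<in> S\<close> by auto
    then show ?thesis
      using blow_rel_remove_last_copy[OF sym irr rel[unfolded p] vk 2] unfolding p T' by blast
  qed
qed

lemma blowV_eq_Sigma: "blowV V t = (SIGMA v:V. {..<t v})"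
  unfolding blowV_def by auto

lemma blow_rel_initial:
  assumes "finite V" and sym: "\<And>x y. E x y \<Longrightarrow> E y x" and irr: "\<And>x. \<not> E x x"
    and pos: "\<And>v. v \<in> V \<Longrightarrow> 0 < t v"
  shows "blow_rel E (strip E V, t) (strip (blowE E) (blowV V t))"
proof -
  have fst_B: "fst ` blowV V t = V"
    unfolding blowV_eq_Sigma fst_image_Sigma using pos by auto
  have "{y \<in> blowV V t. fst y \<in> strip E V} = (SIGMA v:strip E V. {..<t v})"
    unfolding blowV_eq_Sigma using strip_subset[of E V] by auto
  then have B: "strip (blowE E) (blowV V t) = (SIGMA v:strip E V. {..<t v})"
    unfolding strip_blowE[OF irr] fst_B .
  show ?thesis
    unfolding blow_rel_iff B
  proof (intro conjI ballI)
    show "finite (SIGMA v:strip E V. {..<t v})"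
      using finite_subset[OF strip_subset \<open>finite V\<close>] by blast
    show "fst ` (SIGMA v:strip E V. {..<t v}) = strip E V"
      unfolding fst_image_Sigma using pos strip_subset[of E V] by auto
    show "strip E (strip E V) = strip E V" using strip_strip[of E, OF sym] .
  qed (simp add: Pair_vimage_Sigma)
qed

theorem theorem2p3:
  fixes V :: "'a set" and E :: "'a \<Rightarrow> 'a \<Rightarrow> bool" and t :: "'a \<Rightarrow> nat"
  assumes "finite V"
    and "\<And>x y. E x y \<Longrightarrow> E y x"
    and "\<And>x. \<not> E x x"
    and "\<And>x y. E x y \<Longrightarrow> x \<in> V \<and> y \<in> V"
    and "\<And>v. v \<in> V \<Longrightarrow> 0 < t v"
  shows "N_pos (wgrim_move E) (strip E V, t) \<longleftrightarrow>
         N_pos (grim_move (blowE E)) (strip (blowE E) (blowV V t))"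
  using N_pos_bisim_iff[of "blow_rel E",
      OF wgrim_move_blow_simulation[OF assms(2,3)] grim_move_blow_simulation[OF assms(2,3)]
      blow_rel_initial[OF assms(1,2,3,5)]] .

end
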